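(* Let $\chi_1 \pmod{q_1}$ and $\chi_2 \pmod{q_2}$ be primitive Dirichlet characters with $\chi_1\chi_2(-1)=1$ and $q_1q_2>1$, and put $N=q_1q_2$. Suppose $q_1\neq1$, and let $\gamma_1,\gamma_2\in\Gamma_0(N)$ have the same left column. Then $S_{\chi_1,\chi_2}(\gamma_1)=S_{\chi_1,\chi_2}(\gamma_2)$.
   Context: A primitive character modulo $1$ means the trivial character. Let $\psi=\chi_1\overline{\chi_2}$, viewed as a character of $\Gamma_0(N)$ via $\psi\left(\begin{smallmatrix} a&b\\ c&d\end{smallmatrix}\right)=\psi(d)$. Write $e(x)=e^{2\pi i x}$, $\tau(\chi)$ for the Gauss sum, $L(s,\chi)$ for the Dirichlet $L$-function. For $z$ in the upper half-plane define $$F_{\chi_1,\chi_2}(z)=c_1z+c_0+\sum_{n\ge1}\frac{\lambda(n)}{\sqrt n}e(nz),\qquad \lambda(n)=\sum_{ab=n}\chi_1(a)\overline{\chi_2}(b)(b/a)^{1/2},$$ where $c_1=\pi i L(-1,\overline{\chi_2})$ if $q_1=1$ and $c_1=0$ otherwise, and $c_0=\tfrac12L(1,\chi_1)$ if $q_2=1$ and $c_0=0$ otherwise. For $\gamma\in\Gamma_0(N)$ the function $F_{\chi_1,\chi_2}(\gamma z)-\psi(\gamma)F_{\chi_1,\chi_2}(z)$ is independent of $z$; call this constant $\phi_{\chi_1,\chi_2}(\gamma)$, and define $S_{\chi_1,\chi_2}(\gamma)=\frac{\tau(\overline{\chi_1})}{\pi i}\phi_{\chi_1,\chi_2}(\gamma)$.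 *)

theory Defs
  imports "HOL-Analysis.Analysis"
begin

definition dirichlet_char :: "nat \<Rightarrow> (int \<Rightarrow> complex) \<Rightarrow> bool" where
  "dirichlet_char q chi \<longleftrightarrow> q > 0 \<and>
     (\<forall>n. chi (n + int q) = chi n) \<and>
     (\<forall>m n. chi (m * n) = chi m * chi n) \<and>
     chi 1 = 1 \<and>
     (\<forall>n. chi n = 0 \<longleftrightarrow> \<not> coprime n (int q))"

definition primitive_char :: "nat \<Rightarrow> (int \<Rightarrow> complex) \<Rightarrow> bool" where
  "primitive_char q chi \<longleftrightarrow> dirichlet_char q chi \<and>
     \<not> (\<exists>d. 0 < d \<and> d < q \<and> d dvd q \<and>
            (\<forall>a. coprime a (int q) \<and> a mod int d = 1 mod int d \<longrightarrow> chi a = 1))"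

definition e :: "complex \<Rightarrow> complex" where
  "e x = exp (2 * of_real pi * \<i> * x)"

definition gauss_sum :: "nat \<Rightarrow> (int \<Rightarrow> complex) \<Rightarrow> complex" where
  "gauss_sum q chi = (\<Sum>a = 1..int q. chi a * e (of_int a / of_nat q))"

(* L(1,chi) for nonprincipal chi: sum of the convergent series sum chi(n)/n *)
definition L_at_1 :: "(int \<Rightarrow> complex) \<Rightarrow> complex" where
  "L_at_1 chi = lim (\<lambda>M. \<Sum>n = 1..M. chi (int n) / of_nat n)"

(* L(-1,chi) = - B_{2,chi} / 2, B_{2,chi} = q * sum_{a=1}^q chi(a) B_2(a/q),
   B_2(x) = x^2 - x + 1/6 (value of the analytic continuation) *)
definition L_at_minus1 :: "nat \<Rightarrow> (int \<Rightarrow> complex) \<Rightarrow> complex" where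
  "L_at_minus1 q chi = - (of_nat q * (\<Sum>a = 1..int q. chi a *
       of_real ((real_of_int a / real q)\<^sup>2 - real_of_int a / real q + 1/6))) / 2"

definition lam :: "(int \<Rightarrow> complex) \<Rightarrow> (int \<Rightarrow> complex) \<Rightarrow> nat \<Rightarrow> complex" where
  "lam chi1 chi2 n = (\<Sum>a\<in>{a. a dvd n}.
      chi1 (int a) * cnj (chi2 (int (n div a))) *
      of_real (sqrt (real (n div a) / real a)))"

definition F :: "nat \<Rightarrow> (int \<Rightarrow> complex) \<Rightarrow> nat \<Rightarrow> (int \<Rightarrow> complex) \<Rightarrow> complex \<Rightarrow> complex" where
  "F q1 chi1 q2 chi2 z =
     (if q1 = 1 then of_real pi * \<i> * L_at_minus1 q2 (\<lambda>n. cnj (chi2 n)) else 0) * z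
   + (if q2 = 1 then L_at_1 chi1 / 2 else 0)
   + (\<Sum>n. lam chi1 chi2 (Suc n) / of_real (sqrt (real (Suc n))) * e (of_nat (Suc n) * z))"

(* matrices (a,b,c,d) = [[a,b],[c,d]] *)
definition Gamma0 :: "nat \<Rightarrow> (int \<times> int \<times> int \<times> int) set" where
  "Gamma0 N = {(a,b,c,d). a * d - b * c = 1 \<and> int N dvd c}"

fun moebius :: "int \<times> int \<times> int \<times> int \<Rightarrow> complex \<Rightarrow> complex" where
  "moebius (a,b,c,d) z = (of_int a * z + of_int b) / (of_int c * z + of_int d)"

fun psi :: "(int \<Rightarrow> complex) \<Rightarrow> (int \<Rightarrow> complex) \<Rightarrow> int \<times> int \<times> int \<times> int \<Rightarrow> complex" where
  "psi chi1 chi2 (a,b,c,d) = chi1 d * cnj (chi2 d)"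

fun left_column :: "int \<times> int \<times> int \<times> int \<Rightarrow> int \<times> int" where
  "left_column (a,b,c,d) = (a,c)"

definition phi :: "nat \<Rightarrow> (int \<Rightarrow> complex) \<Rightarrow> nat \<Rightarrow> (int \<Rightarrow> complex) \<Rightarrow>
                   int \<times> int \<times> int \<times> int \<Rightarrow> complex" where
  "phi q1 chi1 q2 chi2 \<gamma> = (THE c. \<forall>z. Im z > 0 \<longrightarrow>
      F q1 chi1 q2 chi2 (moebius \<gamma> z) - psi chi1 chi2 \<gamma> * F q1 chi1 q2 chi2 z = c)"

definition S :: "nat \<Rightarrow> (int \<Rightarrow> complex) \<Rightarrow> nat \<Rightarrow> (int \<Rightarrow> complex) \<Rightarrow>
                 int \<times> int \<times> int \<times> int \<Rightarrow> complex" where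
  "S q1 chi1 q2 chi2 \<gamma> = gauss_sum q1 (\<lambda>n. cnj (chi1 n)) / (of_real pi * \<i>) * phi q1 chi1 q2 chi2 \<gamma>"

end

theory Submission
  imports Defs
begin

text \<open>Two matrices of determinant one with the same left column differ by a right factor
  \<open>T\<^sup>k = [[1,k],[0,1]]\<close>. Since \<open>q\<^sub>1 \<noteq> 1\<close> the linear term \<open>c\<^sub>1 z\<close> vanishes, so \<open>F\<close> is
  1-periodic; and \<open>\<psi>\<close> is unchanged because the lower right entry moves by \<open>k c\<close> with \<open>N | c\<close>.
  Hence \<open>\<phi>(\<gamma> T\<^sup>k) = \<phi>(\<gamma>)\<close>.\<close>

lemma e_add_of_int: "e (z + of_int k) = e z"
proof -
  have "exp (2 * of_real pi * \<i> * of_int k) = 1"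
    using exp_integer_2pi[of "real_of_int k"] by (simp add: mult_ac)
  then show ?thesis
    unfolding e_def by (simp add: distrib_left exp_add)
qed

lemma F_add_of_int:
  assumes "q1 \<noteq> 1"
  shows "F q1 chi1 q2 chi2 (z + of_int k) = F q1 chi1 q2 chi2 z"
proof -
  have "e (of_nat (Suc n) * (z + of_int k)) = e (of_nat (Suc n) * z)" for n
    using e_add_of_int[of "of_nat (Suc n) * z" "int (Suc n) * k"] by (simp add: distrib_left)
  then show ?thesis
    unfolding F_def using assms by (simp only:) simp
qed

lemma periodic_add_mult:
  fixes f :: "int \<Rightarrow> 'a"
  assumes "\<And>n. f (n + p) = f n"
  shows "f (n + p * m) = f n"
proof (induction m arbitrary: n rule: int_induct[where k = 0])
  case base
  then show ?case by simp
next
  case (step1 i)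
  then show ?case
    using assms by (metis add.assoc distrib_left mult.right_neutral)
next
  case (step2 i)
  have "f (n + p * (i - 1)) = f (n + p * (i - 1) + p)"
    using assms by simp
  also have "\<dots> = f n"
    using step2 by (simp add: algebra_simps)
  finally show ?case .
qed

lemma dirichlet_char_cong:
  assumes "dirichlet_char q chi" and "int q dvd m - n"
  shows "chi m = chi n"
proof -
  obtain t where "m = n + int q * t"
    using assms(2) by (metis add_diff_cancel_left' add_diff_eq dvd_def)
  moreover have "\<And>x. chi (x + int q) = chi x"
    using assms(1) unfolding dirichlet_char_def by blast
  ultimately show ?thesis
    using periodic_add_mult by metis
qed

lemma det_one_same_left_column:
  fixes a b c d b' d' :: int
  assumes "a * d - b * c = 1" and "a * d' - b' * c = 1"
  obtains k where "b' = b + a * k" and "d' = d + c * k"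
proof
  define k where "k = d * b' - b * d'"
  have bc: "b * c = a * d - 1" and b'c: "b' * c = a * d' - 1"
    using assms by simp_all
  show "b' = b + a * k"
  proof -
    have "b + a * k = (a * d) * b' - (a * d') * b + b"
      by (simp add: k_def algebra_simps)
    also have "\<dots> = (1 + b * c) * b' - (1 + b' * c) * b + b"
      using bc b'c by simp
    also have "\<dots> = b'"
      by (simp add: algebra_simps)
    finally show ?thesis by simp
  qed
  show "d' = d + c * k"
  proof -
    have "d + c * k = (b' * c) * d - (b * c) * d' + d"
      by (simp add: k_def algebra_simps)
    also have "\<dots> = (a * d' - 1) * d - (a * d - 1) * d' + d"
      by (simp only: bc b'c)
    also have "\<dots> = d'"
      by (simp add: algebra_simps)
    finally show ?thesis by simp
  qed
qed

lemma upper_half_plane_translate_const_iff: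
  fixes G :: "complex \<Rightarrow> 'a"
  shows "(\<forall>z. Im z > 0 \<longrightarrow> G (z + of_real t) = c) \<longleftrightarrow> (\<forall>z. Im z > 0 \<longrightarrow> G z = c)"
proof
  assume "\<forall>z. Im z > 0 \<longrightarrow> G (z + of_real t) = c"
  then show "\<forall>z. Im z > 0 \<longrightarrow> G z = c"
    by (metis diff_add_cancel Im_complex_of_real diff_zero minus_complex.sel(2))
qed simp

lemma phi_translate:
  assumes "q1 \<noteq> 1"
    and "\<And>z. moebius \<gamma>' z = moebius \<gamma> (z + of_int k)"
    and "psi chi1 chi2 \<gamma>' = psi chi1 chi2 \<gamma>"
  shows "phi q1 chi1 q2 chi2 \<gamma>' = phi q1 chi1 q2 chi2 \<gamma>"
proof -
  let ?G = "\<lambda>\<gamma> z. F q1 chi1 q2 chi2 (moebius \<gamma> z) - psi chi1 chi2 \<gamma> * F q1 chi1 q2 chi2 z"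
  have "?G \<gamma>' z = ?G \<gamma> (z + of_real (of_int k))" for z
    using assms F_add_of_int[OF assms(1)] by simp
  then show ?thesis
    unfolding phi_def
    using upper_half_plane_translate_const_iff[of "?G \<gamma>" "of_int k"] by simp
qed

theorem proposition2p4:
  fixes q1 q2 :: nat and chi1 chi2 :: "int \<Rightarrow> complex"
    and \<gamma>1 \<gamma>2 :: "int \<times> int \<times> int \<times> int"
  assumes "primitive_char q1 chi1" and "primitive_char q2 chi2"
    and "chi1 (-1) * chi2 (-1) = 1"
    and "q1 * q2 > 1"
    and "q1 \<noteq> 1"
    and "\<gamma>1 \<in> Gamma0 (q1 * q2)" and "\<gamma>2 \<in> Gamma0 (q1 * q2)"
    and "left_column \<gamma>1 = left_column \<gamma>2"
  shows "S q1 chi1 q2 chi2 \<gamma>1 = S q1 chi1 q2 chi2 \<gamma>2"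
proof -
  obtain a b c d b' d' where \<gamma>: "\<gamma>1 = (a, b, c, d)" "\<gamma>2 = (a, b', c, d')"
    using assms(8) by (cases \<gamma>1, cases \<gamma>2) auto
  have N_dvd_c: "int (q1 * q2) dvd c"
    using assms(6) \<gamma> unfolding Gamma0_def by simp
  have "a * d - b * c = 1" and "a * d' - b' * c = 1"
    using assms(6,7) \<gamma> unfolding Gamma0_def by simp_all
  then obtain k where b': "b' = b + a * k" and d': "d' = d + c * k"
    by (rule det_one_same_left_column)
  have "int q1 dvd d' - d" and "int q2 dvd d' - d"
    using N_dvd_c d' by (auto intro: dvd_mult_left dvd_mult_right)
  moreover have "dirichlet_char q1 chi1" and "dirichlet_char q2 chi2"
    using assms(1,2) unfolding primitive_char_def by simp_all
  ultimately have "chi1 d' = chi1 d" and "chi2 d' = chi2 d"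
    by (simp_all add: dirichlet_char_cong)
  then have "psi chi1 chi2 \<gamma>2 = psi chi1 chi2 \<gamma>1"
    unfolding \<gamma> by simp
  moreover have "moebius \<gamma>2 z = moebius \<gamma>1 (z + of_int k)" for z
    unfolding \<gamma> b' d' by (simp add: algebra_simps)
  ultimately show ?thesis
    unfolding S_def using phi_translate[OF assms(5)] by metis
qed

end
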